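(* Let $\mathbf{X}$ be a binary matrix. If the rectangle cover graph $\mathcal{G}(\mathbf{X})$ contains an odd antihole with at least $7$ vertices (as an induced subgraph), then $\mathbf{X}$ has a submatrix which, after permuting its rows and columns, equals $\mathbf{W}$ or $\overline{\mathbf{I}}_4$.
   Context: For a binary matrix $\mathbf{X}$, $\mathrm{supp}(\mathbf{X})=\{(i,j):x_{i,j}=1\}$; a submatrix is obtained by deleting rows and columns; a rectangle is a set $I\times J\subseteq\mathrm{supp}(\mathbf{X})$. The rectangle cover graph $\mathcal{G}(\mathbf{X})$ has vertex set $\mathrm{supp}(\mathbf{X})$, two vertices being adjacent iff some rectangle of $\mathbf{X}$ contains both. A hole is an induced chordless cycle of length at least $4$; an odd antihole is an induced subgraph whose complement is a hole of odd length. Let $\mathbf{C}_3$ be the $3\times 3$ binary matrix with $1$s exactly at $(1,1),(1,2),(2,2),(2,3),(3,1),(3,3)$, and $\mathbf{1}$ the all-ones column vector of length $3$. Then $\mathbf{W}=\begin{bmatrix}\mathbf{C}_3&\mathbf{1}\\ \mathbf{1}^\top&1\end{bmatrix}$ and $\overline{\mathbf{I}}_4=\begin{bmatrix}\mathbf{C}_3&\mathbf{1}\\ \mathbf{1}^\top&0\end{bmatrix}$, both in $\{0,1\}^{4\times4}$. *)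

theory Defs
  imports Main
begin

text \<open>A binary m x n matrix is represented as X :: nat => nat => bool together with
  its dimensions m n; entry (i,j) for i < m, j < n (0-indexed); True means 1.\<close>

definition supp :: "(nat \<Rightarrow> nat \<Rightarrow> bool) \<Rightarrow> nat \<Rightarrow> nat \<Rightarrow> (nat \<times> nat) set" where
  "supp X m n = {(i, j). i < m \<and> j < n \<and> X i j}"

definition is_rectangle :: "(nat \<Rightarrow> nat \<Rightarrow> bool) \<Rightarrow> nat \<Rightarrow> nat \<Rightarrow> (nat \<times> nat) set \<Rightarrow> bool" where
  "is_rectangle X m n R \<longleftrightarrow> (\<exists>I J. R = I \<times> J \<and> R \<subseteq> supp X m n)"

definition rc_adj :: "(nat \<Rightarrow> nat \<Rightarrow> bool) \<Rightarrow> nat \<Rightarrow> nat \<Rightarrow> nat \<times> nat \<Rightarrow> nat \<times> nat \<Rightarrow> bool" where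
  "rc_adj X m n u v \<longleftrightarrow> u \<in> supp X m n \<and> v \<in> supp X m n \<and> u \<noteq> v \<and>
     (\<exists>R. is_rectangle X m n R \<and> u \<in> R \<and> v \<in> R)"

text \<open>Induced odd antihole on k vertices v 0, ..., v (k-1): the complement of the induced
  subgraph is the cycle v 0 - v 1 - ... - v (k-1) - v 0, i.e. two distinct listed vertices are
  adjacent iff they are not cyclically consecutive.\<close>
definition rc_has_odd_antihole_ge7 :: "(nat \<Rightarrow> nat \<Rightarrow> bool) \<Rightarrow> nat \<Rightarrow> nat \<Rightarrow> bool" where
  "rc_has_odd_antihole_ge7 X m n \<longleftrightarrow>
     (\<exists>k (v :: nat \<Rightarrow> nat \<times> nat). odd k \<and> 7 \<le> k \<and> inj_on v {..<k} \<and>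
        v ` {..<k} \<subseteq> supp X m n \<and>
        (\<forall>a<k. \<forall>b<k. a \<noteq> b \<longrightarrow>
           (rc_adj X m n (v a) (v b) \<longleftrightarrow> \<not> (b = (a + 1) mod k \<or> a = (b + 1) mod k))))"

definition C3 :: "nat \<Rightarrow> nat \<Rightarrow> bool" where
  "C3 i j \<longleftrightarrow> (i, j) \<in> {(0,0),(0,1),(1,1),(1,2),(2,0),(2,2)}"

definition W_mat :: "nat \<Rightarrow> nat \<Rightarrow> bool" where
  "W_mat i j = (if i < 3 \<and> j < 3 then C3 i j else True)"

definition Ibar4_mat :: "nat \<Rightarrow> nat \<Rightarrow> bool" where
  "Ibar4_mat i j = (if i < 3 \<and> j < 3 then C3 i j else \<not> (i = 3 \<and> j = 3))"

definition has_perm_submatrix4 ::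
  "(nat \<Rightarrow> nat \<Rightarrow> bool) \<Rightarrow> nat \<Rightarrow> nat \<Rightarrow> (nat \<Rightarrow> nat \<Rightarrow> bool) \<Rightarrow> bool" where
  "has_perm_submatrix4 X m n M \<longleftrightarrow>
     (\<exists>r c. inj_on r {..<4} \<and> inj_on c {..<4} \<and> r ` {..<4} \<subseteq> {..<m} \<and> c ` {..<4} \<subseteq> {..<n} \<and>
        (\<forall>i<4. \<forall>j<4. X (r i) (c j) = M i j))"

end

theory Submission imports Defs begin

text \<open>Walk around the antihole v 0, ..., v (k-1) and record row R x and column C x of the x-th
  vertex. Two vertices span a rectangle iff the two crossing entries are 1, so all crossing
  entries of non-consecutive vertices are 1, and every consecutive pair has a crossing 0.
  Since k is odd, the entries X (R x) (C (x+1)) cannot alternate around the cycle, so two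
  successive ones are equal. If both are 0, the six vertices x, ..., x+5 contain W or the
  complement of I_4; if both are 1, the crossing entries in the other direction are 0 and the
  same configuration appears reading the cycle backwards.\<close>

lemma rc_adj_iff_cross_entries:
  assumes "u \<in> supp X m n" "v \<in> supp X m n" "u \<noteq> v"
  shows "rc_adj X m n u v \<longleftrightarrow> X (fst u) (snd v) \<and> X (fst v) (snd u)"
proof
  assume "rc_adj X m n u v"
  then obtain I J where "u \<in> I \<times> J" "v \<in> I \<times> J" "I \<times> J \<subseteq> supp X m n"
    unfolding rc_adj_def is_rectangle_def by blast
  then have "(fst u, snd v) \<in> supp X m n" "(fst v, snd u) \<in> supp X m n"
    by (auto simp: mem_Times_iff)
  then show "X (fst u) (snd v) \<and> X (fst v) (snd u)"
    by (simp add: supp_def)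
next
  assume cross: "X (fst u) (snd v) \<and> X (fst v) (snd u)"
  let ?R = "{fst u, fst v} \<times> {snd u, snd v}"
  have "?R \<subseteq> supp X m n"
    using assms(1,2) cross unfolding supp_def by auto
  then have "is_rectangle X m n ?R"
    unfolding is_rectangle_def by blast
  then show "rc_adj X m n u v"
    unfolding rc_adj_def by (intro conjI exI[where x = ?R]) (use assms in \<open>simp_all add: mem_Times_iff\<close>)
qed

lemma mod_add_neq:
  fixes k :: nat
  assumes "0 < d" "d < k"
  shows "(x + d) mod k \<noteq> x mod k"
  using assms by (metis add_diff_cancel_left' le_add1 mod_eq_dvd_iff_nat nat_dvd_not_less)

lemma cyclic_antihole_adj:
  fixes k :: nat
  assumes antihole: "\<forall>a<k. \<forall>b<k. a \<noteq> b \<longrightarrow>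
      (adj (v a) (v b) \<longleftrightarrow> \<not> (b = (a + 1) mod k \<or> a = (b + 1) mod k))"
    and "2 \<le> d" "d + 2 \<le> k"
  shows "adj (v (x mod k)) (v ((x + d) mod k))"
proof -
  have succ_mod: "(y mod k + 1) mod k = (y + 1) mod k" for y
    by (simp add: mod_Suc_eq)
  have "(x + d) mod k \<noteq> x mod k"
    using mod_add_neq[of d k x] assms by simp
  moreover have "(x + d) mod k \<noteq> (x mod k + 1) mod k"
    using mod_add_neq[of "d - 1" k "x + 1"] assms unfolding succ_mod by simp
  moreover have "x mod k \<noteq> ((x + d) mod k + 1) mod k"
    using mod_add_neq[of "d + 1" k x] assms unfolding succ_mod by (simp add: add.assoc)
  ultimately show ?thesis
    using antihole[rule_format, of "x mod k" "(x + d) mod k"] assms by simp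
qed

lemma cyclic_antihole_not_adj:
  fixes k :: nat
  assumes antihole: "\<forall>a<k. \<forall>b<k. a \<noteq> b \<longrightarrow>
      (adj (v a) (v b) \<longleftrightarrow> \<not> (b = (a + 1) mod k \<or> a = (b + 1) mod k))"
    and "2 \<le> k"
  shows "\<not> adj (v (x mod k)) (v (Suc x mod k))"
proof -
  have "Suc x mod k \<noteq> x mod k"
    using mod_add_neq[of 1 k x] assms by simp
  moreover have "Suc x mod k = (x mod k + 1) mod k"
    by (simp add: mod_Suc_eq)
  ultimately show ?thesis
    using antihole[rule_format, of "x mod k" "Suc x mod k"] assms by simp
qed

lemma has_perm_submatrix4I:
  assumes "distinct [r0, r1, r2, r3]" "distinct [c0, c1, c2, c3]"
    and "set [r0, r1, r2, r3] \<subseteq> {..<m}" "set [c0, c1, c2, c3] \<subseteq> {..<n}"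
    and "\<forall>i<4. \<forall>j<4. X ([r0, r1, r2, r3] ! i) ([c0, c1, c2, c3] ! j) = M i j"
  shows "has_perm_submatrix4 X m n M"
  unfolding has_perm_submatrix4_def
proof (intro exI conjI)
  show "inj_on (\<lambda>i. [r0, r1, r2, r3] ! i) {..<4}" "inj_on (\<lambda>j. [c0, c1, c2, c3] ! j) {..<4}"
    using assms(1,2) unfolding inj_on_def by (auto simp: less_Suc_eq numeral_eq_Suc)
  show "(\<lambda>i. [r0, r1, r2, r3] ! i) ` {..<4} \<subseteq> {..<m}" "(\<lambda>j. [c0, c1, c2, c3] ! j) ` {..<4} \<subseteq> {..<n}"
    using assms(3,4) by (auto simp: less_Suc_eq numeral_eq_Suc)
qed (use assms(5) in blast)

lemma all_less_4: "(\<forall>i<(4::nat). P i) \<longleftrightarrow> P 0 \<and> P 1 \<and> P 2 \<and> P 3"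
  by (auto simp: less_Suc_eq numeral_eq_Suc)

text \<open>Six successive vertices of the antihole with two successive zeros X (R 0) (C 1) and
  X (R 1) (C 2): rows R 0, R 1, R 5, R 4 and columns C 2, C 4, C 1, C 5 give W when
  X (R 4) (C 5) is the 1 of the pair 4, 5; otherwise rows R 0, R 1, R 4, R 5 and columns
  C 2, C 5, C 1, C 4 give W or the complement of I_4, depending on X (R 5) (C 4).\<close>

lemma antihole_window_submatrix:
  fixes R C :: "nat \<Rightarrow> nat"
  assumes range: "\<And>i. i \<le> 5 \<Longrightarrow> R i < m \<and> C i < n"
    and ones: "\<And>i j. i \<le> 5 \<Longrightarrow> j \<le> 5 \<Longrightarrow> j \<noteq> Suc i \<Longrightarrow> i \<noteq> Suc j \<Longrightarrow> X (R i) (C j)"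
    and zeros: "\<not> X (R 0) (C 1)" "\<not> X (R 1) (C 2)"
    and not_both: "\<not> (X (R 4) (C 5) \<and> X (R 5) (C 4))"
  shows "has_perm_submatrix4 X m n W_mat \<or> has_perm_submatrix4 X m n Ibar4_mat"
proof -
  have bounds: "R 0 < m" "R 1 < m" "R 4 < m" "R 5 < m" "C 1 < n" "C 2 < n" "C 4 < n" "C 5 < n"
    using range by simp_all
  have entries: "X (R 0) (C 2)" "X (R 0) (C 4)" "X (R 0) (C 5)" "X (R 1) (C 1)" "X (R 1) (C 4)"
    "X (R 1) (C 5)" "X (R 4) (C 1)" "X (R 4) (C 2)" "X (R 4) (C 4)" "X (R 5) (C 1)"
    "X (R 5) (C 2)" "X (R 5) (C 5)"
    by (simp_all add: ones)
  show ?thesis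
  proof (cases "X (R 4) (C 5)")
    case True
    then have "has_perm_submatrix4 X m n W_mat"
      by (intro has_perm_submatrix4I[of "R 0" "R 1" "R 5" "R 4" "C 2" "C 4" "C 1" "C 5"])
        (use bounds entries zeros not_both in \<open>auto simp: all_less_4 W_mat_def C3_def\<close>)
    then show ?thesis ..
  next
    case False
    then have "has_perm_submatrix4 X m n (if X (R 5) (C 4) then W_mat else Ibar4_mat)"
      by (intro has_perm_submatrix4I[of "R 0" "R 1" "R 4" "R 5" "C 2" "C 5" "C 1" "C 4"])
        (use bounds entries zeros in \<open>auto simp: all_less_4 W_mat_def Ibar4_mat_def C3_def\<close>)
    then show ?thesis by (auto split: if_splits)
  qed
qed

lemma odd_period_not_alternating:
  fixes P :: "nat \<Rightarrow> bool"
  assumes "odd k" "\<And>x. P (x + k) = P x"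
  shows "\<exists>x. P x = P (Suc x)"
proof (rule ccontr)
  assume "\<not> ?thesis"
  then have step: "P (Suc x) \<longleftrightarrow> \<not> P x" for x
    by blast
  have "P x = (P 0 = even x)" for x
    by (induction x) (simp_all add: step)
  from this[of k] assms show False by (metis add_0)
qed

locale antihole_walk =
  fixes X :: "nat \<Rightarrow> nat \<Rightarrow> bool" and m n k :: nat and R C :: "nat \<Rightarrow> nat"
  assumes odd_length: "odd k" and length_ge_7: "7 \<le> k"
    and R_periodic: "\<And>x. R (x + k) = R x" and C_periodic: "\<And>x. C (x + k) = C x"
    and R_less: "\<And>x. R x < m" and C_less: "\<And>x. C x < n"
    and cross_entry: "\<And>x y. y \<noteq> Suc x \<Longrightarrow> x \<noteq> Suc y \<Longrightarrow> x + 2 \<le> y + k \<Longrightarrow> y + 2 \<le> x + k \<Longrightarrow>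
      X (R x) (C y)"
    and consecutive_zero: "\<And>x. \<not> (X (R x) (C (Suc x)) \<and> X (R (Suc x)) (C x))"

lemma odd_antihole_walk:
  assumes "rc_has_odd_antihole_ge7 X m n"
  shows "\<exists>k R C. antihole_walk X m n k R C"
proof -
  obtain k and v :: "nat \<Rightarrow> nat \<times> nat" where "odd k" and k7: "7 \<le> k"
    and inj: "inj_on v {..<k}" and vs: "v ` {..<k} \<subseteq> supp X m n"
    and antihole: "\<forall>a<k. \<forall>b<k. a \<noteq> b \<longrightarrow>
      (rc_adj X m n (v a) (v b) \<longleftrightarrow> \<not> (b = (a + 1) mod k \<or> a = (b + 1) mod k))"
    using assms unfolding rc_has_odd_antihole_ge7_def by blast
  define R where "R x = fst (v (x mod k))" for x
  define C where "C x = snd (v (x mod k))" for x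
  have in_supp: "v (x mod k) \<in> supp X m n" for x
    using vs k7 by auto
  have range: "R x < m" "C x < n" "X (R x) (C x)" for x
    using in_supp[of x] unfolding supp_def R_def C_def by (simp_all add: case_prod_beta)
  have far: "X (R x) (C (x + d)) \<and> X (R (x + d)) (C x)" if "2 \<le> d" "d + 2 \<le> k" for x d
  proof -
    have "rc_adj X m n (v (x mod k)) (v ((x + d) mod k))"
      using cyclic_antihole_adj[where adj = "rc_adj X m n" and v = v, OF antihole that] .
    then show ?thesis
      using rc_adj_iff_cross_entries in_supp unfolding R_def C_def rc_adj_def by blast
  qed
  have ones: "X (R x) (C y)"
    if "y \<noteq> Suc x" "x \<noteq> Suc y" "x + 2 \<le> y + k" "y + 2 \<le> x + k" for x y
  proof -
    have "x = y \<or> x + 2 \<le> y \<or> y + 2 \<le> x"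
      using that by linarith
    then consider "x = y" | "x + 2 \<le> y" | "y + 2 \<le> x"
      by blast
    then show ?thesis
    proof cases
      case 2
      then show ?thesis using far[of "y - x" x] that by simp
    next
      case 3
      then show ?thesis using far[of "x - y" y] that by simp
    qed (use range in simp)
  qed
  have not_both: "\<not> (X (R x) (C (Suc x)) \<and> X (R (Suc x)) (C x))" for x
  proof -
    have "x mod k \<noteq> Suc x mod k"
      using mod_add_neq[of 1 k x] k7 by simp
    then have "v (x mod k) \<noteq> v (Suc x mod k)"
      using inj_on_eq_iff[OF inj, of "x mod k" "Suc x mod k"] k7 by simp
    then show ?thesis
      using cyclic_antihole_not_adj[where adj = "rc_adj X m n" and v = v, OF antihole, of x] k7 in_supp
      unfolding R_def C_def by (simp add: rc_adj_iff_cross_entries)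
  qed
  have "antihole_walk X m n k R C"
    by unfold_locales (use \<open>odd k\<close> k7 range ones not_both in \<open>simp_all add: R_def C_def\<close>)
  then show ?thesis
    by blast
qed

context antihole_walk
begin

lemma successive_entries_equal: "\<exists>a. X (R a) (C (Suc a)) = X (R (Suc a)) (C (Suc (Suc a)))"
proof -
  have "X (R (x + k)) (C (Suc (x + k))) = X (R x) (C (Suc x))" for x
    by (metis add_Suc R_periodic C_periodic)
  then show ?thesis
    using odd_period_not_alternating[OF odd_length, of "\<lambda>x. X (R x) (C (Suc x))"] by auto
qed

lemma forward_zeros_submatrix:
  assumes "\<not> X (R a) (C (Suc a))" "\<not> X (R (Suc a)) (C (Suc (Suc a)))"
  shows "has_perm_submatrix4 X m n W_mat \<or> has_perm_submatrix4 X m n Ibar4_mat"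
proof (rule antihole_window_submatrix[where R = "\<lambda>i. R (a + i)" and C = "\<lambda>i. C (a + i)"])
  show "X (R (a + i)) (C (a + j))" if "i \<le> 5" "j \<le> 5" "j \<noteq> Suc i" "i \<noteq> Suc j" for i j
    by (rule cross_entry) (use that length_ge_7 in simp_all)
  show "\<not> X (R (a + 0)) (C (a + 1))" "\<not> X (R (a + 1)) (C (a + 2))"
    using assms by (simp_all add: numeral_eq_Suc)
  show "\<not> (X (R (a + 4)) (C (a + 5)) \<and> X (R (a + 5)) (C (a + 4)))"
    using consecutive_zero[of "a + 4"] by (simp add: numeral_eq_Suc)
qed (simp add: R_less C_less)

text \<open>The backward window starts at a + k + 2 rather than a + 2, so that the vertices
  a + 2, a + 1, ..., a - 3 are indexed without truncated subtraction.\<close>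

lemma backward_zeros_submatrix:
  assumes "\<not> X (R (Suc a)) (C a)" "\<not> X (R (Suc (Suc a))) (C (Suc a))"
  shows "has_perm_submatrix4 X m n W_mat \<or> has_perm_submatrix4 X m n Ibar4_mat"
proof (rule antihole_window_submatrix[where R = "\<lambda>i. R (a + k + 2 - i)" and C = "\<lambda>i. C (a + k + 2 - i)"])
  have reversed: "R (a + k + 2 - i) = R (a + 2 - i)" "C (a + k + 2 - i) = C (a + 2 - i)"
    if "i \<le> 2" for i
    using R_periodic[of "a + 2 - i"] C_periodic[of "a + 2 - i"] that
    by (simp_all add: add.commute add.left_commute)
  show "X (R (a + k + 2 - i)) (C (a + k + 2 - j))"
    if "i \<le> 5" "j \<le> 5" "j \<noteq> Suc i" "i \<noteq> Suc j" for i j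
    by (rule cross_entry) (use that length_ge_7 in simp_all)
  show "\<not> X (R (a + k + 2 - 0)) (C (a + k + 2 - 1))" "\<not> X (R (a + k + 2 - 1)) (C (a + k + 2 - 2))"
    using assms reversed[of 0] reversed[of 1] reversed[of 2] by (simp_all add: numeral_eq_Suc)
  have "Suc (a + k + 2 - 5) = a + k + 2 - 4"
    using length_ge_7 by simp
  then show "\<not> (X (R (a + k + 2 - 4)) (C (a + k + 2 - 5)) \<and> X (R (a + k + 2 - 5)) (C (a + k + 2 - 4)))"
    using consecutive_zero[of "a + k + 2 - 5"] by metis
qed (simp add: R_less C_less)

lemma has_W_or_Ibar4:
  "has_perm_submatrix4 X m n W_mat \<or> has_perm_submatrix4 X m n Ibar4_mat"
proof -
  obtain a where a: "X (R a) (C (Suc a)) = X (R (Suc a)) (C (Suc (Suc a)))"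
    using successive_entries_equal by blast
  show ?thesis
  proof (cases "X (R a) (C (Suc a))")
    case False
    with a show ?thesis by (intro forward_zeros_submatrix) simp_all
  next
    case True
    with a consecutive_zero[of a] consecutive_zero[of "Suc a"] show ?thesis
      by (intro backward_zeros_submatrix) simp_all
  qed
qed

end

theorem lemma4:
  fixes X :: "nat \<Rightarrow> nat \<Rightarrow> bool" and m n :: nat
  assumes "rc_has_odd_antihole_ge7 X m n"
  shows "has_perm_submatrix4 X m n W_mat \<or> has_perm_submatrix4 X m n Ibar4_mat"
proof -
  obtain k R C where "antihole_walk X m n k R C"
    using odd_antihole_walk[OF assms] by blast
  then show ?thesis
    by (rule antihole_walk.has_W_or_Ibar4)
qed

end
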